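(* Let $\varphi$ be an analytic self-map of $\mathbb{D}$ and $n$ a positive integer, and suppose $D_{\varphi,n}$ is a bounded operator on $H^2$. Then $D_{\varphi,n}$ is a Hilbert–Schmidt operator on $H^2$ if and only if \[ \lim_{r\to1}\frac{1}{2\pi}\int_0^{2\pi}\frac{d\theta}{\big(1-|\varphi(re^{i\theta})|^2\big)^{2n+1}}<\infty. \]
   Context: $\mathbb{D}$ is the open unit disk in $\mathbb{C}$ and $H^2$ is the Hardy space of analytic functions $f$ on $\mathbb{D}$ with $\|f\|^2=\lim_{r\to1}\frac{1}{2\pi}\int_0^{2\pi}|f(re^{i\theta})|^2\,d\theta<\infty$. For an analytic self-map $\varphi$ of $\mathbb{D}$ and a positive integer $n$, $D_{\varphi,n}$ is the operator $D_{\varphi,n}f=f^{(n)}\circ\varphi$. A bounded operator $A$ on a separable Hilbert space is Hilbert–Schmidt if $\sum_{m}\|Ae_m\|^2<\infty$ for an (equivalently, every) orthonormal basis $\{e_m\}$. *)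

theory Defs
  imports "HOL-Complex_Analysis.Complex_Analysis"
begin

definition circ_mean :: "(complex \<Rightarrow> complex) \<Rightarrow> real \<Rightarrow> complex" where
  "circ_mean g r = integral {0..2*pi} (\<lambda>\<theta>. g (complex_of_real r * exp (\<i> * complex_of_real \<theta>))) / complex_of_real (2*pi)"

definition H2_mean :: "(complex \<Rightarrow> complex) \<Rightarrow> real \<Rightarrow> real" where
  "H2_mean f r = (1 / (2*pi)) * integral {0..2*pi} (\<lambda>\<theta>. (cmod (f (complex_of_real r * exp (\<i> * complex_of_real \<theta>))))\<^sup>2)"

definition in_H2 :: "(complex \<Rightarrow> complex) \<Rightarrow> bool" where
  "in_H2 f \<longleftrightarrow> f holomorphic_on ball 0 1 \<and> (\<exists>L. (H2_mean f \<longlongrightarrow> L) (at_left 1))"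

definition H2_norm :: "(complex \<Rightarrow> complex) \<Rightarrow> real" where
  "H2_norm f = sqrt (Lim (at_left 1) (H2_mean f))"

definition H2_inner :: "(complex \<Rightarrow> complex) \<Rightarrow> (complex \<Rightarrow> complex) \<Rightarrow> complex" where
  "H2_inner f g = Lim (at_left 1) (circ_mean (\<lambda>z. f z * cnj (g z)))"

text \<open>Orthonormal basis of H^2 (H^2 is separable and infinite dimensional, so indexed by nat).
  Completeness: the only element orthogonal to all basis vectors is zero (on the disc).\<close>
definition H2_ONB :: "(nat \<Rightarrow> complex \<Rightarrow> complex) \<Rightarrow> bool" where
  "H2_ONB e \<longleftrightarrow> (\<forall>m. in_H2 (e m)) \<and>
     (\<forall>j k. H2_inner (e j) (e k) = (if j = k then 1 else 0)) \<and>
     (\<forall>f. in_H2 f \<and> (\<forall>m. H2_inner f (e m) = 0) \<longrightarrow> (\<forall>z\<in>ball 0 1. f z = 0))"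

definition D_op :: "(complex \<Rightarrow> complex) \<Rightarrow> nat \<Rightarrow> (complex \<Rightarrow> complex) \<Rightarrow> (complex \<Rightarrow> complex)" where
  "D_op \<phi> n f = (\<lambda>z. (deriv ^^ n) f (\<phi> z))"

definition H2_bounded_op :: "((complex \<Rightarrow> complex) \<Rightarrow> (complex \<Rightarrow> complex)) \<Rightarrow> bool" where
  "H2_bounded_op A \<longleftrightarrow> (\<forall>f. in_H2 f \<longrightarrow> in_H2 (A f)) \<and>
     (\<exists>C. \<forall>f. in_H2 f \<longrightarrow> H2_norm (A f) \<le> C * H2_norm f)"

definition H2_Hilbert_Schmidt :: "((complex \<Rightarrow> complex) \<Rightarrow> (complex \<Rightarrow> complex)) \<Rightarrow> bool" where
  "H2_Hilbert_Schmidt A \<longleftrightarrow> H2_bounded_op A \<and>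
     (\<exists>e. H2_ONB e \<and> summable (\<lambda>m. (H2_norm (A (e m)))\<^sup>2))"

end

theory Submission
  imports Defs
begin

text \<open>
  Taylor coefficients identify H^2 with l^2. Evaluating the n-th derivative at w is the inner
  product with the kernel whose (k+n)-th coefficient is (k+n)!/k! * conj(w)^k, so Parseval's
  identity gives sum_m |e_m^(n)(w)|^2 = K(|w|^2), where K(x) = sum_k ((k+n)!/k!)^2 x^k, for every
  orthonormal basis (e_m). Substituting w = phi(z) and averaging over |z| = r (monotone
  convergence), sum_m M_r(D e_m) is the average of K(|phi|^2) over the circle, M_r being the
  integral mean that defines the H^2 norm. The bounds
  binom(k+2n, 2n) <= ((k+n)!/k!)^2 <= (2n)! binom(k+2n, 2n) make K(x) comparable with
  (1-x)^-(2n+1). Finally, M_r(f) increases to ||f||^2 as r -> 1, and the average of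
  (1 - |phi|^2)^-(2n+1) increases with r, being sum_j binom(j+2n, 2n) M_r(phi^j).
\<close>

section \<open>Averages over circles and limits at the boundary\<close>

abbreviation circle_point :: "real \<Rightarrow> real \<Rightarrow> complex" where
  "circle_point r \<theta> \<equiv> complex_of_real r * exp (\<i> * complex_of_real \<theta>)"

definition circle_avg :: "(complex \<Rightarrow> real) \<Rightarrow> real \<Rightarrow> real" where
  "circle_avg g r = (1 / (2*pi)) * integral {0..2*pi} (\<lambda>\<theta>. g (circle_point r \<theta>))"

lemma H2_mean_eq_circle_avg: "H2_mean f = circle_avg (\<lambda>z. (cmod (f z))\<^sup>2)"
  by (simp add: fun_eq_iff H2_mean_def circle_avg_def)

lemma circle_point_in_disc: "0 \<le> r \<Longrightarrow> r < 1 \<Longrightarrow> circle_point r \<theta> \<in> ball 0 1"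
  by (simp add: norm_mult)

lemma continuous_on_circle:
  assumes "continuous_on (ball 0 1) g" and "0 \<le> r" "r < 1"
  shows "continuous_on A (\<lambda>\<theta>. g (circle_point r \<theta>))"
  by (rule continuous_on_compose2[OF assms(1)])
     (use assms(2,3) circle_point_in_disc in \<open>auto intro!: continuous_intros\<close>)

lemma integrable_circle:
  fixes g :: "complex \<Rightarrow> 'a::banach"
  assumes "continuous_on (ball 0 1) g" and "0 \<le> r" "r < 1"
  shows "(\<lambda>\<theta>. g (circle_point r \<theta>)) integrable_on {0..2*pi}"
  by (rule integrable_continuous_real, rule continuous_on_circle[OF assms])

lemma circle_avg_mono:
  assumes "continuous_on (ball 0 1) g" "continuous_on (ball 0 1) h"
    and "\<And>z. z \<in> ball 0 1 \<Longrightarrow> g z \<le> h z" and "0 \<le> r" "r < 1"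
  shows "circle_avg g r \<le> circle_avg h r"
  unfolding circle_avg_def
  by (intro mult_left_mono integral_le integrable_circle assms circle_point_in_disc) auto

lemma circle_avg_cmult: "circle_avg (\<lambda>z. c * g z) r = c * circle_avg g r"
  by (simp add: circle_avg_def)

lemma sums_integral_nonneg:
  fixes u :: "nat \<Rightarrow> 'a::euclidean_space \<Rightarrow> real"
  assumes u: "\<And>m. u m integrable_on S" "\<And>m x. x \<in> S \<Longrightarrow> 0 \<le> u m x"
    and F: "F integrable_on S" "\<And>x. x \<in> S \<Longrightarrow> (\<lambda>m. u m x) sums F x"
  shows "(\<lambda>m. integral S (u m)) sums integral S F"
proof -
  define U where "U M x = (\<Sum>m<M. u m x)" for M x
  have U: "U M integrable_on S" for M
    unfolding U_def by (intro integrable_sum u) simp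
  have "U M x \<le> F x" if "x \<in> S" for M x
    unfolding U_def using F(2)[OF that] u(2)[OF that] by (metis sums_iff sum_le_suminf finite_lessThan)
  then have "integral S (U M) \<le> integral S F" for M
    by (intro integral_le U F)
  moreover have "0 \<le> integral S (U M)" for M
    using U by (rule integral_nonneg) (auto simp: U_def intro: sum_nonneg u)
  ultimately have "bounded (range (\<lambda>M. integral S (U M)))"
    by (intro boundedI[of _ "integral S F"]) auto
  then have "(\<lambda>M. integral S (U M)) \<longlonglongrightarrow> integral S F"
    using F u by (intro conjunct2[OF monotone_convergence_increasing[OF U]])
      (auto simp: U_def sums_def)
  moreover have "integral S (U M) = (\<Sum>m<M. integral S (u m))" for M
    unfolding U_def by (rule integral_sum) (auto intro: u)
  ultimately show ?thesis by (simp add: sums_def)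
qed

lemma circle_avg_sums:
  assumes u: "\<And>m. continuous_on (ball 0 1) (u m)" "\<And>m z. z \<in> ball 0 1 \<Longrightarrow> 0 \<le> u m z"
    and F: "continuous_on (ball 0 1) F" "\<And>z. z \<in> ball 0 1 \<Longrightarrow> (\<lambda>m. u m z) sums F z"
    and r: "0 \<le> r" "r < 1"
  shows "(\<lambda>m. circle_avg (u m) r) sums circle_avg F r"
  unfolding circle_avg_def
  by (intro sums_mult sums_integral_nonneg integrable_circle u F r circle_point_in_disc)

lemma eventually_at_left_1_unit_interval: "eventually (\<lambda>r. 0 < r \<and> r < (1::real)) (at_left 1)"
  by (rule eventually_mono[OF eventually_at_left_real[of 0 1]]) auto

lemma tendsto_abs_summable_at_left_1:
  fixes a :: "nat \<Rightarrow> 'a::{banach, real_normed_field}"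
  assumes "summable (\<lambda>k. norm (a k))"
  shows "((\<lambda>r. \<Sum>k. a k * of_real (r^(2*k))) \<longlongrightarrow> (\<Sum>k. a k)) (at_left 1)"
proof -
  define F where "F r = (\<Sum>k. a k * of_real (r^(2*k)))" for r :: real
  have "norm (a k * of_real (r^(2*k))) \<le> norm (a k)" if "r \<in> {0..1}" for k r
  proof -
    have "\<bar>r^(2*k)\<bar> \<le> 1" using that by (auto simp: power_le_one)
    then show ?thesis by (simp only: norm_mult norm_of_real) (rule mult_left_le[OF _ norm_ge_zero])
  qed
  then have "uniform_limit {0..1} (\<lambda>n r. \<Sum>k<n. a k * of_real (r^(2*k))) F sequentially"
    unfolding F_def by (rule Weierstrass_m_test[OF _ assms])
  then have "continuous_on {0..1} F"
    by (rule uniform_limit_theorem[rotated]) (auto intro!: always_eventually continuous_intros)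
  then have "(F \<longlongrightarrow> F 1) (at 1 within {0..1})"
    by (simp add: continuous_on_def)
  then have "(F \<longlongrightarrow> F 1) (at 1 within {..<1})"
  proof (rule Lim_transform_within_set)
    have "eventually (\<lambda>x. x \<in> ball (1::real) 1) (at 1)"
      by (rule eventually_at_in_open') auto
    then show "eventually (\<lambda>x. x \<in> {0..1} \<longleftrightarrow> x \<in> {..<(1::real)}) (at 1)"
      unfolding eventually_at_filter by eventually_elim (auto simp: dist_real_def)
  qed
  then show ?thesis unfolding F_def by simp
qed

lemma convergent_at_left_1_if_mono_bounded:
  fixes G :: "real \<Rightarrow> real"
  assumes mono: "\<And>a b. 0 < a \<Longrightarrow> a \<le> b \<Longrightarrow> b < 1 \<Longrightarrow> G a \<le> G b"
    and bounded: "\<And>r. 0 < r \<Longrightarrow> r < 1 \<Longrightarrow> G r \<le> B"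
  shows "\<exists>L. (G \<longlongrightarrow> L) (at_left 1)"
proof -
  define I where "I = {0<..<(1::real)}"
  have "(G \<longlongrightarrow> Sup (G ` ({..<1} \<inter> I))) (at 1 within ({..<1} \<inter> I))"
  proof (rule Lim_left_bound)
    show "G a \<le> G b" if "a \<in> I" "b \<in> I" "b < 1" "a \<le> b" for a b
      using that by (intro mono) (auto simp: I_def)
    show "G b \<le> B" if "b \<in> I" "b < 1" for b
      using that by (intro bounded) (auto simp: I_def)
  qed
  then have "(G \<longlongrightarrow> Sup (G ` ({..<1} \<inter> I))) (at 1 within {..<1})"
  proof (rule Lim_transform_within_set)
    have "eventually (\<lambda>x. x \<in> ball (1::real) 1) (at 1)"
      by (rule eventually_at_in_open') auto
    then show "eventually (\<lambda>x. x \<in> {..<1} \<inter> I \<longleftrightarrow> x \<in> {..<(1::real)}) (at 1)"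
      unfolding eventually_at_filter I_def by eventually_elim (auto simp: dist_real_def)
  qed
  then show ?thesis
    by blast
qed

section \<open>Taylor coefficients and the Hardy space\<close>

lemma has_integral_exp_i_int:
  fixes m :: int
  shows "((\<lambda>\<theta>. exp (\<i> * of_int m * of_real \<theta>)) has_integral (if m = 0 then 2*pi else 0)) {0..2*pi}"
proof (cases "m = 0")
  case True
  then show ?thesis using has_integral_const_real[of "1::complex" 0 "2*pi"] by (simp add: scaleR_conv_of_real)
next
  case False
  define F where "F = (\<lambda>z::complex. exp (\<i> * of_int m * z) / (\<i> * of_int m))"
  have d: "((\<lambda>x. F (of_real x)) has_vector_derivative exp (\<i> * of_int m * of_real x)) (at x within {0..2*pi})" for x
    by (rule has_vector_derivative_real_field) (use False in \<open>auto simp: F_def intro!: derivative_eq_intros\<close>)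
  have "((\<lambda>\<theta>. exp (\<i> * of_int m * of_real \<theta>)) has_integral (F (of_real (2*pi)) - F (of_real 0))) {0..2*pi}"
    by (rule fundamental_theorem_of_calculus) (use d in auto)
  moreover have "exp (\<i> * of_int m * of_real (2*pi)) = 1"
    using exp_integer_2pi[of "of_int m"] by (simp add: mult_ac)
  ultimately show ?thesis using False by (simp add: F_def)
qed

lemma sums_integral_Weierstrass:
  fixes u :: "nat \<Rightarrow> real \<Rightarrow> 'a::banach"
  assumes c: "\<And>k. continuous_on {a..b} (u k)" and bd: "\<And>k x. x \<in> {a..b} \<Longrightarrow> norm (u k x) \<le> M k"
    and M: "summable M"
  shows "(\<lambda>k. integral {a..b} (u k)) sums integral {a..b} (\<lambda>x. \<Sum>k. u k x)"
    and "(\<lambda>x. \<Sum>k. u k x) integrable_on {a..b}"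
proof -
  have ul: "uniform_limit {a..b} (\<lambda>n x. \<Sum>i<n. u i x) (\<lambda>x. \<Sum>k. u k x) sequentially"
    by (rule Weierstrass_m_test[OF bd M])
  have cs: "continuous_on {a..b} (\<lambda>x. \<Sum>i<n. u i x)" for n
    by (intro continuous_intros c)
  obtain I J where I: "\<And>n. ((\<lambda>x. \<Sum>i<n. u i x) has_integral I n) {a..b}"
    and J: "((\<lambda>x. \<Sum>k. u k x) has_integral J) {a..b}" and IJ: "I \<longlonglongrightarrow> J"
    by (rule uniform_limit_integral[OF ul cs]) auto
  have "((\<lambda>x. \<Sum>i<n. u i x) has_integral (\<Sum>i<n. integral {a..b} (u i))) {a..b}" for n
    by (intro has_integral_sum) (auto intro: integrable_continuous_real c)
  then have "I = (\<lambda>n. \<Sum>i<n. integral {a..b} (u i))"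
    using I has_integral_unique by blast
  then show "(\<lambda>k. integral {a..b} (u k)) sums integral {a..b} (\<lambda>x. \<Sum>k. u k x)"
    using IJ J unfolding sums_def by (simp add: integral_unique)
  show "(\<lambda>x. \<Sum>k. u k x) integrable_on {a..b}"
    using J by blast
qed

lemma summable_norm_power_series_disc:
  fixes c :: "nat \<Rightarrow> complex"
  assumes "\<And>z. z \<in> ball 0 1 \<Longrightarrow> summable (\<lambda>j. c j * z^j)" and r: "0 \<le> r" "r < 1"
  shows "summable (\<lambda>j. norm (c j) * r^j)"
proof -
  have "complex_of_real ((1+r)/2) \<in> ball 0 1" using r by (simp only: mem_ball_0 norm_of_real) auto
  then have "summable (\<lambda>j. c j * (complex_of_real ((1+r)/2))^j)"
    using assms(1) by blast
  then have "summable (\<lambda>j. of_real (norm (c j)) * (complex_of_real r)^j)"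
    by (rule power_series_conv_imp_absconv_weak) (use r in \<open>simp only: norm_of_real, simp\<close>)
  then have "summable (\<lambda>j. complex_of_real (norm (c j) * r^j))"
    by simp
  then show ?thesis
    using summable_of_real_iff by blast
qed

lemma circle_point_power_mult_exp:
  "circle_point r \<theta> ^ j * exp (-(\<i> * of_nat k * of_real \<theta>))
   = of_real (r^j) * exp (\<i> * of_int (int j - int k) * of_real \<theta>)"
proof -
  have "exp (\<i> * complex_of_real \<theta>) ^ j = exp (of_nat j * (\<i> * complex_of_real \<theta>))"
    by (simp add: exp_of_nat_mult)
  moreover have "exp (of_nat j * (\<i> * of_real \<theta>)) * exp (-(\<i> * of_nat k * of_real \<theta>))
     = exp (\<i> * of_int (int j - int k) * complex_of_real \<theta>)"
    by (simp add: exp_add[symmetric] algebra_simps)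
  ultimately show ?thesis
    by (simp add: power_mult_distrib mult.assoc)
qed

lemma cnj_circle_point_power:
  "cnj (circle_point r \<theta> ^ k) = of_real (r^k) * exp (-(\<i> * of_nat k * of_real \<theta>))"
proof -
  have "exp (-(\<i> * complex_of_real \<theta>)) ^ k = exp (of_nat k * (-(\<i> * complex_of_real \<theta>)))"
    by (rule exp_of_nat_mult[symmetric])
  then show ?thesis
    by (simp add: exp_cnj power_mult_distrib mult_ac)
qed

lemma has_integral_power_series_circle:
  fixes c :: "nat \<Rightarrow> complex"
  assumes S: "\<And>z. z \<in> ball 0 1 \<Longrightarrow> (\<lambda>j. c j * z^j) sums F z" and r: "0 \<le> r" "r < 1"
  shows "((\<lambda>\<theta>. F (circle_point r \<theta>) * exp (-(\<i> * of_nat k * of_real \<theta>)))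
           has_integral (2*pi * c k * r^k)) {0..2*pi}"
proof -
  define u where "u j \<theta> = c j * of_real (r^j) * exp (\<i> * of_int (int j - int k) * complex_of_real \<theta>)" for j \<theta>
  have M: "summable (\<lambda>j. norm (c j) * r^j)"
    by (rule summable_norm_power_series_disc) (use S r in \<open>auto simp: sums_iff\<close>)
  have bd: "norm (u j \<theta>) \<le> norm (c j) * r^j" for j \<theta>
    using r by (simp add: u_def norm_mult norm_power)
  have ui: "integral {0..2*pi} (u j) = (if j = k then 2*pi * c k * r^k else 0)" for j
  proof -
    have "(u j has_integral (c j * of_real (r^j)) * (if int j - int k = 0 then 2*pi else 0)) {0..2*pi}"
      unfolding u_def by (rule has_integral_mult_right[OF has_integral_exp_i_int])
    then show ?thesis by (auto simp: integral_unique)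
  qed
  then have coeff: "(\<lambda>j. integral {0..2*pi} (u j)) sums (2*pi * c k * r^k)"
    unfolding ui using sums_single[of k "\<lambda>_. 2*pi * c k * r^k"] by simp
  have "continuous_on {0..2*pi} (u j)" for j
    unfolding u_def by (intro continuous_intros)
  note series = sums_integral_Weierstrass[OF this bd M]
  have "integral {0..2*pi} (\<lambda>\<theta>. \<Sum>j. u j \<theta>) = 2*pi * c k * r^k"
    by (rule sums_unique2[OF series(1) coeff])
  moreover have "(\<lambda>j. u j \<theta>) sums (F (circle_point r \<theta>) * exp (-(\<i> * of_nat k * of_real \<theta>)))" for \<theta>
  proof -
    have "c j * (circle_point r \<theta> ^ j * exp (-(\<i> * of_nat k * of_real \<theta>))) = u j \<theta>" for j
      unfolding u_def circle_point_power_mult_exp by (simp only: mult.assoc)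
    then show ?thesis
      using sums_mult2[OF S[OF circle_point_in_disc[OF r, of \<theta>]], of "exp (-(\<i> * of_nat k * of_real \<theta>))"]
      by (simp only: mult.assoc)
  qed
  then have "(\<lambda>\<theta>. \<Sum>j. u j \<theta>) = (\<lambda>\<theta>. F (circle_point r \<theta>) * exp (-(\<i> * of_nat k * of_real \<theta>)))"
    by (simp add: sums_iff)
  ultimately show ?thesis
    using integrable_integral[OF series(2)] by simp
qed

definition taylor_coeff :: "(complex \<Rightarrow> complex) \<Rightarrow> nat \<Rightarrow> complex" where
  "taylor_coeff f k = (deriv ^^ k) f 0 / fact k"

lemma taylor_coeff_sums:
  assumes "f holomorphic_on ball 0 1" "z \<in> ball 0 1"
  shows "(\<lambda>j. taylor_coeff f j * z^j) sums f z"
  using holomorphic_power_series[OF assms] by (simp add: taylor_coeff_def)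

lemma power_series_disc_holomorphic:
  assumes "\<And>z. z \<in> ball 0 1 \<Longrightarrow> (\<lambda>j. c j * z^j) sums F z"
  shows "F holomorphic_on ball 0 1"
  by (rule power_series_holomorphic[where a=c]) (use assms in simp)

lemma power_series_disc_unique:
  fixes c d :: "nat \<Rightarrow> complex"
  assumes "\<And>z. z \<in> ball 0 1 \<Longrightarrow> (\<lambda>j. c j * z^j) sums F z"
    and "\<And>z. z \<in> ball 0 1 \<Longrightarrow> (\<lambda>j. d j * z^j) sums F z"
  shows "c = d"
proof
  fix k
  have "2*pi * c k * (complex_of_real (1/2))^k = 2*pi * d k * (complex_of_real (1/2))^k"
    by (rule has_integral_unique[OF has_integral_power_series_circle[where r="1/2", OF assms(1)]
          has_integral_power_series_circle[where r="1/2", OF assms(2)]]) auto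
  then show "c k = d k" by simp
qed

lemma taylor_coeff_power_series:
  assumes "\<And>z. z \<in> ball 0 1 \<Longrightarrow> (\<lambda>j. c j * z^j) sums F z"
  shows "taylor_coeff F = c"
  by (rule power_series_disc_unique[OF taylor_coeff_sums[OF power_series_disc_holomorphic[OF assms]] assms])

lemma bounded_on_circle:
  assumes "continuous_on (ball 0 1) g" and r: "0 \<le> r" "r < 1"
  obtains B where "\<And>\<theta>. norm (g (circle_point r \<theta>)) \<le> B"
proof -
  have "compact (g ` cball 0 r)"
    using r by (intro compact_continuous_image continuous_on_subset[OF assms(1)]) auto
  then have "bounded (g ` cball 0 r)"
    by (rule compact_imp_bounded)
  then obtain B where B: "\<And>z. z \<in> cball 0 r \<Longrightarrow> norm (g z) \<le> B"
    unfolding bounded_iff by blast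
  have "circle_point r \<theta> \<in> cball 0 r" for \<theta>
    using r by (simp add: norm_mult)
  then show ?thesis
    using that B by blast
qed

lemma cnj_taylor_sums_circle:
  assumes g: "g holomorphic_on ball 0 1" and r: "0 \<le> r" "r < 1"
  shows "(\<lambda>k. cnj (taylor_coeff g k) * of_real (r^k) * exp (-(\<i> * of_nat k * of_real \<theta>)))
           sums cnj (g (circle_point r \<theta>))"
  using sums_cnj[THEN iffD2, OF taylor_coeff_sums[OF g circle_point_in_disc[OF r]]]
  unfolding complex_cnj_mult cnj_circle_point_power by (simp only: mult.assoc)

lemma circ_mean_sums_taylor:
  assumes f: "f holomorphic_on ball 0 1" and g: "g holomorphic_on ball 0 1" and r: "0 \<le> r" "r < 1"
  shows "(\<lambda>k. taylor_coeff f k * cnj (taylor_coeff g k) * of_real (r^(2*k))) sums circ_mean (\<lambda>z. f z * cnj (g z)) r"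
proof -
  define u where "u k \<theta> = f (circle_point r \<theta>) * (cnj (taylor_coeff g k) * of_real (r^k) * exp (-(\<i> * of_nat k * of_real \<theta>)))" for k \<theta>
  obtain B where B: "\<And>\<theta>. norm (f (circle_point r \<theta>)) \<le> B"
    using bounded_on_circle[OF holomorphic_on_imp_continuous_on[OF f] r] by blast
  have "summable (\<lambda>k. norm (taylor_coeff g k) * r^k)"
    by (rule summable_norm_power_series_disc[OF _ r]) (use taylor_coeff_sums[OF g] in \<open>auto simp: sums_iff\<close>)
  then have M: "summable (\<lambda>k. B * (norm (taylor_coeff g k) * r^k))"
    by (rule summable_mult)
  have bd: "norm (u k \<theta>) \<le> B * (norm (taylor_coeff g k) * r^k)" for k \<theta>
    using r mult_right_mono[OF B, of "norm (taylor_coeff g k) * r^k"]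
    by (simp add: u_def norm_mult norm_power)
  have "continuous_on {0..2*pi} (u k)" for k
    unfolding u_def by (intro continuous_intros continuous_on_circle[OF holomorphic_on_imp_continuous_on[OF f] r])
  note series = sums_integral_Weierstrass(1)[OF this bd M]
  have sum_u: "(\<lambda>\<theta>. \<Sum>k. u k \<theta>) = (\<lambda>\<theta>. f (circle_point r \<theta>) * cnj (g (circle_point r \<theta>)))"
    using sums_mult[OF cnj_taylor_sums_circle[OF g r]] by (simp add: u_def sums_iff)
  have "integral {0..2*pi} (u k) = cnj (taylor_coeff g k) * of_real (r^k) * (2*pi * taylor_coeff f k * complex_of_real r ^ k)" for k
  proof -
    have "((\<lambda>\<theta>. (cnj (taylor_coeff g k) * of_real (r^k)) * (f (circle_point r \<theta>) * exp (-(\<i> * of_nat k * of_real \<theta>))))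
           has_integral (cnj (taylor_coeff g k) * of_real (r^k)) * (2*pi * taylor_coeff f k * complex_of_real r ^ k)) {0..2*pi}"
      by (intro has_integral_mult_right has_integral_power_series_circle taylor_coeff_sums[OF f] r)
    moreover have "(\<lambda>\<theta>. (cnj (taylor_coeff g k) * of_real (r^k)) * (f (circle_point r \<theta>) * exp (-(\<i> * of_nat k * of_real \<theta>)))) = u k"
      by (auto simp: u_def mult_ac)
    ultimately show ?thesis by (simp add: integral_unique)
  qed
  then have "integral {0..2*pi} (u k) / complex_of_real (2*pi) = taylor_coeff f k * cnj (taylor_coeff g k) * of_real (r^(2*k))" for k
    by (simp add: power_mult_distrib power2_eq_square power_mult field_simps)
  with sums_divide[OF series, of "complex_of_real (2*pi)"] show ?thesis
    unfolding circ_mean_def sum_u by simp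
qed

lemma circ_mean_mult_cnj_self:
  assumes f: "f holomorphic_on ball 0 1" and r: "0 \<le> r" "r < 1"
  shows "circ_mean (\<lambda>z. f z * cnj (f z)) r = complex_of_real (H2_mean f r)"
proof -
  define h where "h \<theta> = (cmod (f (circle_point r \<theta>)))\<^sup>2" for \<theta>
  have "h integrable_on {0..2*pi}"
    unfolding h_def by (intro integrable_circle continuous_intros holomorphic_on_imp_continuous_on[OF f] r)
  from has_integral_of_real[OF integrable_integral[OF this]]
  have "((\<lambda>\<theta>. complex_of_real (h \<theta>)) has_integral complex_of_real (integral {0..2*pi} h)) {0..2*pi}" .
  moreover have "(\<lambda>\<theta>. complex_of_real (h \<theta>)) = (\<lambda>\<theta>. f (circle_point r \<theta>) * cnj (f (circle_point r \<theta>)))"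
    unfolding h_def complex_norm_square by simp
  ultimately have "integral {0..2*pi} (\<lambda>\<theta>. f (circle_point r \<theta>) * cnj (f (circle_point r \<theta>)))
      = complex_of_real (integral {0..2*pi} h)"
    by (simp add: integral_unique)
  then show ?thesis
    unfolding circ_mean_def H2_mean_def h_def by simp
qed

lemma H2_mean_sums_taylor:
  assumes f: "f holomorphic_on ball 0 1" and r: "0 \<le> r" "r < 1"
  shows "(\<lambda>k. (cmod (taylor_coeff f k))\<^sup>2 * r^(2*k)) sums H2_mean f r"
proof -
  have "(\<lambda>k. taylor_coeff f k * cnj (taylor_coeff f k) * of_real (r^(2*k))) sums complex_of_real (H2_mean f r)"
    using circ_mean_sums_taylor[OF f f r] circ_mean_mult_cnj_self[OF f r] by simp
  moreover have "taylor_coeff f k * cnj (taylor_coeff f k) * of_real (r^(2*k))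
      = complex_of_real ((cmod (taylor_coeff f k))\<^sup>2 * r^(2*k))" for k
    by (simp only: of_real_mult complex_norm_square)
  ultimately show ?thesis
    by (simp only: sums_of_real_iff)
qed

lemma H2_mean_nonneg:
  assumes "f holomorphic_on ball 0 1" "0 \<le> r" "r < 1"
  shows "0 \<le> H2_mean f r"
  by (rule sums_le[OF _ sums_zero H2_mean_sums_taylor[OF assms]]) simp

lemma H2_mean_mono:
  assumes h: "h holomorphic_on ball 0 1" and r: "0 \<le> r1" "r1 \<le> r2" "r2 < 1"
  shows "H2_mean h r1 \<le> H2_mean h r2"
proof (rule sums_le[OF _ H2_mean_sums_taylor[OF h, of r1] H2_mean_sums_taylor[OF h, of r2]])
  show "(cmod (taylor_coeff h k))\<^sup>2 * r1^(2*k) \<le> (cmod (taylor_coeff h k))\<^sup>2 * r2^(2*k)" for k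
    using r by (intro mult_left_mono power_mono) auto
qed (use r in auto)

lemma H2_mean_tendsto_taylor:
  assumes f: "f holomorphic_on ball 0 1" and s: "summable (\<lambda>k. (cmod (taylor_coeff f k))\<^sup>2)"
  shows "(H2_mean f \<longlongrightarrow> (\<Sum>k. (cmod (taylor_coeff f k))\<^sup>2)) (at_left 1)"
proof -
  have "((\<lambda>r. \<Sum>k. (cmod (taylor_coeff f k))\<^sup>2 * of_real (r^(2*k))) \<longlongrightarrow> (\<Sum>k. (cmod (taylor_coeff f k))\<^sup>2)) (at_left 1)"
    by (rule tendsto_abs_summable_at_left_1) (use s in simp)
  moreover have "eventually (\<lambda>r. (\<Sum>k. (cmod (taylor_coeff f k))\<^sup>2 * of_real (r^(2*k))) = H2_mean f r) (at_left 1)"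
    using eventually_at_left_1_unit_interval
    by eventually_elim (use H2_mean_sums_taylor[OF f] in \<open>simp add: sums_iff\<close>)
  ultimately show ?thesis
    by (rule Lim_transform_eventually)
qed

lemma in_H2_iff_summable_taylor:
  "in_H2 f \<longleftrightarrow> f holomorphic_on ball 0 1 \<and> summable (\<lambda>k. (cmod (taylor_coeff f k))\<^sup>2)"
proof
  assume "in_H2 f"
  then obtain L where f: "f holomorphic_on ball 0 1" and L: "(H2_mean f \<longlongrightarrow> L) (at_left 1)"
    unfolding in_H2_def by blast
  have "(\<Sum>k<N. (cmod (taylor_coeff f k))\<^sup>2) \<le> L" for N
  proof (rule tendsto_le[OF _ L])
    show "((\<lambda>r. \<Sum>k<N. (cmod (taylor_coeff f k))\<^sup>2 * r^(2*k)) \<longlongrightarrow> (\<Sum>k<N. (cmod (taylor_coeff f k))\<^sup>2)) (at_left 1)"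
      by (rule tendsto_eq_intros refl)+ simp
    show "eventually (\<lambda>r. (\<Sum>k<N. (cmod (taylor_coeff f k))\<^sup>2 * r^(2*k)) \<le> H2_mean f r) (at_left 1)"
      using eventually_at_left_1_unit_interval
    proof eventually_elim
      case (elim r)
      with H2_mean_sums_taylor[OF f, of r] show ?case
        using sum_le_suminf[of "\<lambda>k. (cmod (taylor_coeff f k))\<^sup>2 * r^(2*k)" "{..<N}"] by (auto simp: sums_iff)
    qed
  qed simp
  then have "summable (\<lambda>k. (cmod (taylor_coeff f k))\<^sup>2)"
    by (rule summableI_nonneg_bounded[rotated]) simp
  with f show "f holomorphic_on ball 0 1 \<and> summable (\<lambda>k. (cmod (taylor_coeff f k))\<^sup>2)" ..
next
  assume "f holomorphic_on ball 0 1 \<and> summable (\<lambda>k. (cmod (taylor_coeff f k))\<^sup>2)"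
  then show "in_H2 f"
    unfolding in_H2_def using H2_mean_tendsto_taylor by blast
qed

lemma H2_norm_square_eq:
  assumes "in_H2 f"
  shows "(H2_norm f)\<^sup>2 = (\<Sum>k. (cmod (taylor_coeff f k))\<^sup>2)"
proof -
  from assms have f: "f holomorphic_on ball 0 1" and s: "summable (\<lambda>k. (cmod (taylor_coeff f k))\<^sup>2)"
    by (auto simp: in_H2_iff_summable_taylor)
  have "Lim (at_left 1) (H2_mean f) = (\<Sum>k. (cmod (taylor_coeff f k))\<^sup>2)"
    by (rule tendsto_Lim[OF _ H2_mean_tendsto_taylor[OF f s]]) simp
  moreover have "0 \<le> (\<Sum>k. (cmod (taylor_coeff f k))\<^sup>2)"
    by (rule suminf_nonneg[OF s]) simp
  ultimately show ?thesis
    by (simp add: H2_norm_def)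
qed

lemma H2_mean_tendsto_H2_norm:
  assumes "in_H2 f"
  shows "(H2_mean f \<longlongrightarrow> (H2_norm f)\<^sup>2) (at_left 1)"
  using assms H2_mean_tendsto_taylor H2_norm_square_eq by (simp add: in_H2_iff_summable_taylor)

lemma H2_mean_le_H2_norm:
  assumes h: "in_H2 h" and r: "0 \<le> r" "r < 1"
  shows "H2_mean h r \<le> (H2_norm h)\<^sup>2"
proof -
  from h have hol: "h holomorphic_on ball 0 1" and s: "summable (\<lambda>k. (cmod (taylor_coeff h k))\<^sup>2)"
    by (auto simp: in_H2_iff_summable_taylor)
  have "(cmod (taylor_coeff h k))\<^sup>2 * r^(2*k) \<le> (cmod (taylor_coeff h k))\<^sup>2" for k
    using r by (intro mult_left_le power_le_one) auto
  then have "H2_mean h r \<le> (\<Sum>k. (cmod (taylor_coeff h k))\<^sup>2)"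
    by (rule sums_le[OF _ H2_mean_sums_taylor[OF hol r] summable_sums[OF s]])
  then show ?thesis
    using H2_norm_square_eq[OF h] by simp
qed

lemma summable_norm_mult_cnj:
  assumes "summable (\<lambda>k. (cmod (a k))\<^sup>2)" "summable (\<lambda>k. (cmod (b k))\<^sup>2)"
  shows "summable (\<lambda>k. norm (a k * cnj (b k)))"
proof (rule summable_comparison_test'[where N=0])
  show "summable (\<lambda>k. ((cmod (a k))\<^sup>2 + (cmod (b k))\<^sup>2) / 2)"
    using assms by (intro summable_divide summable_add)
  show "norm (norm (a k * cnj (b k))) \<le> ((cmod (a k))\<^sup>2 + (cmod (b k))\<^sup>2) / 2" for k
    using sum_squares_bound[of "cmod (a k)" "cmod (b k)"] by (simp add: norm_mult)
qed

lemma H2_inner_eq_taylor: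
  assumes f: "in_H2 f" and g: "in_H2 g"
  shows "H2_inner f g = (\<Sum>k. taylor_coeff f k * cnj (taylor_coeff g k))"
proof -
  from f g have hf: "f holomorphic_on ball 0 1" and hg: "g holomorphic_on ball 0 1"
    and sf: "summable (\<lambda>k. (cmod (taylor_coeff f k))\<^sup>2)" and sg: "summable (\<lambda>k. (cmod (taylor_coeff g k))\<^sup>2)"
    by (auto simp: in_H2_iff_summable_taylor)
  have "((\<lambda>r. \<Sum>k. (taylor_coeff f k * cnj (taylor_coeff g k)) * of_real (r^(2*k)))
          \<longlongrightarrow> (\<Sum>k. taylor_coeff f k * cnj (taylor_coeff g k))) (at_left 1)"
    by (rule tendsto_abs_summable_at_left_1[OF summable_norm_mult_cnj[OF sf sg]])
  moreover have "eventually (\<lambda>r. (\<Sum>k. (taylor_coeff f k * cnj (taylor_coeff g k)) * of_real (r^(2*k)))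
      = circ_mean (\<lambda>z. f z * cnj (g z)) r) (at_left 1)"
    using eventually_at_left_1_unit_interval
    by eventually_elim (use circ_mean_sums_taylor[OF hf hg] in \<open>simp add: sums_iff\<close>)
  ultimately have "(circ_mean (\<lambda>z. f z * cnj (g z)) \<longlongrightarrow> (\<Sum>k. taylor_coeff f k * cnj (taylor_coeff g k))) (at_left 1)"
    by (rule Lim_transform_eventually)
  then show ?thesis
    unfolding H2_inner_def by (rule tendsto_Lim[rotated]) simp
qed

section \<open>Square-summable sequences\<close>

definition l2 :: "(nat \<Rightarrow> complex) \<Rightarrow> bool" where
  "l2 x \<longleftrightarrow> summable (\<lambda>j. (cmod (x j))\<^sup>2)"

definition l2_inner :: "(nat \<Rightarrow> complex) \<Rightarrow> (nat \<Rightarrow> complex) \<Rightarrow> complex" where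
  "l2_inner x y = (\<Sum>j. x j * cnj (y j))"

definition l2_norm2 :: "(nat \<Rightarrow> complex) \<Rightarrow> real" where
  "l2_norm2 x = (\<Sum>j. (cmod (x j))\<^sup>2)"

lemma l2_add: "l2 x \<Longrightarrow> l2 y \<Longrightarrow> l2 (\<lambda>j. x j + y j)"
  unfolding l2_def
proof (rule summable_comparison_test'[where N=0])
  assume "summable (\<lambda>j. (cmod (x j))\<^sup>2)" "summable (\<lambda>j. (cmod (y j))\<^sup>2)"
  then show "summable (\<lambda>j. 2 * (cmod (x j))\<^sup>2 + 2 * (cmod (y j))\<^sup>2)"
    by (intro summable_add summable_mult)
  fix j
  have "(cmod (x j + y j))\<^sup>2 \<le> (cmod (x j) + cmod (y j))\<^sup>2"
    by (simp add: power_mono norm_triangle_ineq)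
  also have "\<dots> \<le> 2 * (cmod (x j))\<^sup>2 + 2 * (cmod (y j))\<^sup>2"
    using sum_squares_bound[of "cmod (x j)" "cmod (y j)"] by (simp add: power2_sum)
  finally show "norm ((cmod (x j + y j))\<^sup>2) \<le> 2 * (cmod (x j))\<^sup>2 + 2 * (cmod (y j))\<^sup>2"
    by simp
qed

lemma l2_cmult: "l2 x \<Longrightarrow> l2 (\<lambda>j. c * x j)"
  unfolding l2_def by (simp add: norm_mult power_mult_distrib summable_mult)

lemma l2_diff: "l2 x \<Longrightarrow> l2 y \<Longrightarrow> l2 (\<lambda>j. x j - y j)"
  using l2_add[of x "\<lambda>j. - y j"] by (simp add: l2_def)

lemma l2_sum: "(\<And>m. m \<in> A \<Longrightarrow> l2 (x m)) \<Longrightarrow> l2 (\<lambda>j. \<Sum>m\<in>A. c m * x m j)"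
proof (induction A rule: infinite_finite_induct)
  case (insert a A)
  then show ?case by (simp add: l2_add l2_cmult)
qed (simp_all add: l2_def)

lemma summable_l2_inner: "l2 x \<Longrightarrow> l2 y \<Longrightarrow> summable (\<lambda>j. x j * cnj (y j))"
  unfolding l2_def by (rule summable_norm_cancel[OF summable_norm_mult_cnj])

lemma l2_inner_add_left: "l2 x \<Longrightarrow> l2 y \<Longrightarrow> l2 z \<Longrightarrow> l2_inner (\<lambda>j. x j + y j) z = l2_inner x z + l2_inner y z"
  unfolding l2_inner_def by (simp add: distrib_right suminf_add summable_l2_inner)

lemma l2_inner_diff_left: "l2 x \<Longrightarrow> l2 y \<Longrightarrow> l2 z \<Longrightarrow> l2_inner (\<lambda>j. x j - y j) z = l2_inner x z - l2_inner y z"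
  unfolding l2_inner_def by (simp add: left_diff_distrib suminf_diff summable_l2_inner)

lemma l2_inner_cmult_left: "l2 x \<Longrightarrow> l2 z \<Longrightarrow> l2_inner (\<lambda>j. c * x j) z = c * l2_inner x z"
  unfolding l2_inner_def by (simp add: mult.assoc suminf_mult summable_l2_inner)

lemma l2_inner_commute:
  assumes "l2 x" "l2 y"
  shows "l2_inner y x = cnj (l2_inner x y)"
proof -
  have "(\<lambda>j. cnj (x j * cnj (y j))) sums cnj (l2_inner x y)"
    unfolding l2_inner_def sums_cnj using summable_l2_inner[OF assms] by (rule summable_sums)
  then show ?thesis
    unfolding l2_inner_def by (simp add: sums_iff mult.commute)
qed

lemma l2_inner_diff_right:
  assumes "l2 x" "l2 y" "l2 z"
  shows "l2_inner z (\<lambda>j. x j - y j) = l2_inner z x - l2_inner z y"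
proof -
  have "l2_inner z (\<lambda>j. x j - y j) = cnj (l2_inner (\<lambda>j. x j - y j) z)"
    using assms by (intro l2_inner_commute l2_diff)
  also have "\<dots> = cnj (l2_inner x z) - cnj (l2_inner y z)"
    using assms by (simp add: l2_inner_diff_left)
  also have "\<dots> = l2_inner z x - l2_inner z y"
    using assms by (simp add: l2_inner_commute[of z])
  finally show ?thesis .
qed

lemma l2_inner_sum_left:
  assumes "\<And>m. m \<in> A \<Longrightarrow> l2 (x m)" "l2 z"
  shows "l2_inner (\<lambda>j. \<Sum>m\<in>A. c m * x m j) z = (\<Sum>m\<in>A. c m * l2_inner (x m) z)"
  using assms
proof (induction A rule: infinite_finite_induct)
  case (insert a A)
  then have "l2_inner (\<lambda>j. c a * x a j + (\<Sum>m\<in>A. c m * x m j)) z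
      = l2_inner (\<lambda>j. c a * x a j) z + l2_inner (\<lambda>j. \<Sum>m\<in>A. c m * x m j) z"
    by (intro l2_inner_add_left l2_cmult l2_sum) auto
  with insert show ?case
    by (simp add: l2_inner_cmult_left)
qed (simp_all add: l2_inner_def)

lemma l2_inner_sum_right:
  assumes "\<And>m. m \<in> A \<Longrightarrow> l2 (x m)" "l2 z"
  shows "l2_inner z (\<lambda>j. \<Sum>m\<in>A. c m * x m j) = (\<Sum>m\<in>A. cnj (c m) * l2_inner z (x m))"
proof -
  have "l2_inner z (\<lambda>j. \<Sum>m\<in>A. c m * x m j) = cnj (\<Sum>m\<in>A. c m * l2_inner (x m) z)"
    using assms by (simp add: l2_inner_commute[of _ z] l2_sum l2_inner_sum_left)
  also have "\<dots> = (\<Sum>m\<in>A. cnj (c m) * l2_inner z (x m))"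
    using assms by (simp add: l2_inner_commute[of _ z])
  finally show ?thesis .
qed

lemma l2_inner_self:
  assumes "l2 x"
  shows "l2_inner x x = complex_of_real (l2_norm2 x)"
proof -
  have "(\<lambda>j. complex_of_real ((cmod (x j))\<^sup>2)) sums complex_of_real (l2_norm2 x)"
    using assms unfolding l2_def l2_norm2_def sums_of_real_iff by (rule summable_sums)
  then show ?thesis
    unfolding l2_inner_def complex_norm_square by (simp add: sums_iff)
qed

lemma l2_norm2_nonneg: "l2 x \<Longrightarrow> 0 \<le> l2_norm2 x"
  unfolding l2_def l2_norm2_def by (auto intro: suminf_nonneg)

lemma norm_square_le_l2_norm2: "l2 y \<Longrightarrow> (cmod (y j))\<^sup>2 \<le> l2_norm2 y"
  unfolding l2_def l2_norm2_def using sum_le_suminf[of "\<lambda>j. (cmod (y j))\<^sup>2" "{j}"] by auto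

lemma l2_norm2_le_pointwise_limit:
  assumes lim: "\<And>j. (\<lambda>M. y M j) \<longlonglongrightarrow> z j" and bd: "\<And>M. M \<ge> M0 \<Longrightarrow> l2 (y M) \<and> l2_norm2 (y M) \<le> B"
  shows "l2 z \<and> l2_norm2 z \<le> B"
proof -
  have le: "(\<Sum>j<N. (cmod (z j))\<^sup>2) \<le> B" for N
  proof (rule tendsto_le[OF _ tendsto_const])
    show "(\<lambda>M. \<Sum>j<N. (cmod (y M j))\<^sup>2) \<longlonglongrightarrow> (\<Sum>j<N. (cmod (z j))\<^sup>2)"
      by (intro tendsto_intros lim)
    have "(\<Sum>j<N. (cmod (y M j))\<^sup>2) \<le> B" if "M0 \<le> M" for M
      using bd[OF that] sum_le_suminf[of "\<lambda>j. (cmod (y M j))\<^sup>2" "{..<N}"]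
      unfolding l2_def l2_norm2_def by auto
    then show "eventually (\<lambda>M. (\<Sum>j<N. (cmod (y M j))\<^sup>2) \<le> B) sequentially"
      unfolding eventually_sequentially by blast
  qed simp
  have s: "summable (\<lambda>j. (cmod (z j))\<^sup>2)"
    by (rule summableI_nonneg_bounded[OF _ le]) simp
  then show ?thesis
    unfolding l2_def l2_norm2_def using suminf_le_const[OF s le] by auto
qed

lemma Cauchy_l2_coordinate:
  assumes y: "\<And>M. l2 (y M)"
    and Cauchy: "\<And>e. 0 < e \<Longrightarrow> \<exists>N. \<forall>m\<ge>N. \<forall>n\<ge>m. l2_norm2 (\<lambda>j. y n j - y m j) < e"
  shows "Cauchy (\<lambda>M. y M j)"
proof (rule CauchyI)
  fix e :: real assume "0 < e"
  then obtain N where N: "\<And>m n. N \<le> m \<Longrightarrow> m \<le> n \<Longrightarrow> l2_norm2 (\<lambda>j. y n j - y m j) < e\<^sup>2"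
    using Cauchy[of "e\<^sup>2"] by auto
  have ordered: "norm (y m j - y n j) < e" if "N \<le> m" "m \<le> n" for m n
  proof -
    have "(cmod (y n j - y m j))\<^sup>2 < e\<^sup>2"
      using norm_square_le_l2_norm2[OF l2_diff[OF y[of n] y[of m]], of j] N[OF that] by linarith
    from power_less_imp_less_base[OF this] \<open>0 < e\<close> show ?thesis
      by (simp add: norm_minus_commute)
  qed
  have "norm (y m j - y n j) < e" if "N \<le> m" "N \<le> n" for m n
    using ordered[of m n] ordered[of n m] that by (cases "m \<le> n") (auto simp: norm_minus_commute)
  then show "\<exists>N. \<forall>m\<ge>N. \<forall>n\<ge>N. norm (y m j - y n j) < e"
    by blast
qed

lemma l2_Cauchy_converges:
  assumes y: "\<And>M. l2 (y M)"
    and Cauchy: "\<And>e. 0 < e \<Longrightarrow> \<exists>N. \<forall>m\<ge>N. \<forall>n\<ge>m. l2_norm2 (\<lambda>j. y n j - y m j) < e"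
  obtains S where "\<And>M. l2 (\<lambda>j. S j - y M j)"
    and "(\<lambda>M. l2_norm2 (\<lambda>j. S j - y M j)) \<longlonglongrightarrow> 0"
proof -
  define S where "S j = lim (\<lambda>M. y M j)" for j
  have S: "(\<lambda>M. y M j) \<longlonglongrightarrow> S j" for j
    using Cauchy_l2_coordinate[OF y Cauchy] unfolding S_def
    by (simp add: Cauchy_convergent_iff convergent_LIMSEQ_iff)
  have tail: "l2 (\<lambda>j. S j - y M j) \<and> l2_norm2 (\<lambda>j. S j - y M j) \<le> e"
    if "0 < e" "\<forall>m\<ge>N. \<forall>n\<ge>m. l2_norm2 (\<lambda>j. y n j - y m j) < e" "N \<le> M" for e N M
    by (rule l2_norm2_le_pointwise_limit[of "\<lambda>M' j. y M' j - y M j" _ M])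
       (use that in \<open>auto intro!: tendsto_intros S l2_diff y less_imp_le\<close>)
  obtain N1 where N1: "\<forall>m\<ge>N1. \<forall>n\<ge>m. l2_norm2 (\<lambda>j. y n j - y m j) < 1"
    using Cauchy[of 1] by auto
  have "l2 (\<lambda>j. S j - y N1 j)"
    using tail[of 1 N1 N1] N1 by auto
  then have "l2 (\<lambda>j. (S j - y N1 j) - (y M j - y N1 j))" for M
    by (rule l2_diff[OF _ l2_diff[OF y y]])
  then have l2_tail: "l2 (\<lambda>j. S j - y M j)" for M
    by simp
  have "(\<lambda>M. l2_norm2 (\<lambda>j. S j - y M j)) \<longlonglongrightarrow> 0"
  proof (rule LIMSEQ_I)
    fix e :: real assume "0 < e"
    then obtain N where "\<forall>m\<ge>N. \<forall>n\<ge>m. l2_norm2 (\<lambda>j. y n j - y m j) < e / 2"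
      using Cauchy[of "e / 2"] by auto
    then have half: "l2_norm2 (\<lambda>j. S j - y M j) \<le> e / 2" if "N \<le> M" for M
      using tail[of "e / 2" N M] that \<open>0 < e\<close> by auto
    have "norm (l2_norm2 (\<lambda>j. S j - y M j) - 0) < e" if "N \<le> M" for M
      using half[OF that] \<open>0 < e\<close> l2_norm2_nonneg[OF l2_tail, of M] by simp
    then show "\<exists>N. \<forall>M\<ge>N. norm (l2_norm2 (\<lambda>j. S j - y M j) - 0) < e"
      by blast
  qed
  with l2_tail that show ?thesis
    by blast
qed

locale l2_orthonormal =
  fixes u :: "nat \<Rightarrow> nat \<Rightarrow> complex"
  assumes l2_u: "\<And>m. l2 (u m)"
    and l2_inner_u: "\<And>m k. l2_inner (u m) (u k) = (if m = k then 1 else 0)"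
begin

lemma l2_comb: "l2 (\<lambda>j. \<Sum>m\<in>A. c m * u m j)"
  by (rule l2_sum) (auto intro: l2_u)

lemma l2_inner_comb_u:
  "finite A \<Longrightarrow> l2_inner (\<lambda>j. \<Sum>m\<in>A. c m * u m j) (u k) = (if k \<in> A then c k else 0)"
  by (simp add: l2_inner_sum_left l2_u l2_inner_u if_distrib[of "\<lambda>x. _ * x"] cong: if_cong)

lemma l2_norm2_comb:
  assumes A: "finite A"
  shows "l2_norm2 (\<lambda>j. \<Sum>m\<in>A. c m * u m j) = (\<Sum>m\<in>A. (cmod (c m))\<^sup>2)"
proof -
  have "complex_of_real (l2_norm2 (\<lambda>j. \<Sum>m\<in>A. c m * u m j))
      = l2_inner (\<lambda>j. \<Sum>m\<in>A. c m * u m j) (\<lambda>j. \<Sum>m\<in>A. c m * u m j)"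
    by (rule l2_inner_self[symmetric, OF l2_comb])
  also have "\<dots> = (\<Sum>m\<in>A. cnj (c m) * c m)"
    using A by (simp add: l2_inner_sum_right l2_u l2_comb l2_inner_comb_u)
  also have "\<dots> = complex_of_real (\<Sum>m\<in>A. (cmod (c m))\<^sup>2)"
    unfolding of_real_sum complex_norm_square by (simp add: mult.commute)
  finally show ?thesis
    by (simp only: of_real_eq_iff)
qed

lemma l2_norm2_diff_projection:
  assumes x: "l2 x" and A: "finite A"
  shows "l2_norm2 (\<lambda>j. x j - (\<Sum>m\<in>A. l2_inner x (u m) * u m j))
       = l2_norm2 x - (\<Sum>m\<in>A. (cmod (l2_inner x (u m)))\<^sup>2)"
proof -
  define p where "p = (\<lambda>j. \<Sum>m\<in>A. l2_inner x (u m) * u m j)"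
  define S where "S = (\<Sum>m\<in>A. (cmod (l2_inner x (u m)))\<^sup>2)"
  have p: "l2 p"
    unfolding p_def by (rule l2_comb)
  have xp: "l2_inner x p = complex_of_real S"
    unfolding p_def S_def of_real_sum complex_norm_square l2_inner_sum_right[OF l2_u x]
    by (simp add: mult.commute)
  have px: "l2_inner p x = complex_of_real S"
    using l2_inner_commute[OF x p] xp by simp
  have pp: "l2_inner p p = complex_of_real S"
    using l2_inner_self[OF p] l2_norm2_comb[OF A] unfolding p_def S_def by simp
  have "complex_of_real (l2_norm2 (\<lambda>j. x j - p j)) = l2_inner (\<lambda>j. x j - p j) (\<lambda>j. x j - p j)"
    by (rule l2_inner_self[symmetric, OF l2_diff[OF x p]])
  also have "\<dots> = (l2_inner x x - l2_inner x p) - (l2_inner p x - l2_inner p p)"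
    by (simp add: l2_inner_diff_left l2_inner_diff_right l2_diff x p)
  also have "\<dots> = complex_of_real (l2_norm2 x - S)"
    using xp px pp l2_inner_self[OF x] by simp
  finally show ?thesis
    unfolding p_def S_def by (simp only: of_real_eq_iff)
qed

lemma bessel_inequality:
  assumes x: "l2 x" and A: "finite A"
  shows "(\<Sum>m\<in>A. (cmod (l2_inner x (u m)))\<^sup>2) \<le> l2_norm2 x"
  using l2_norm2_nonneg[OF l2_diff[OF x l2_comb[of "\<lambda>m. l2_inner x (u m)" A]]]
    l2_norm2_diff_projection[OF x A] by simp

lemma l2_norm2_partial_sums_diff:
  assumes "M \<le> M'"
  shows "l2_norm2 (\<lambda>j. (\<Sum>m<M'. c m * u m j) - (\<Sum>m<M. c m * u m j)) = (\<Sum>m\<in>{M..<M'}. (cmod (c m))\<^sup>2)"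
proof -
  have "(\<Sum>m<M'. c m * u m j) - (\<Sum>m<M. c m * u m j) = (\<Sum>m\<in>{M..<M'}. c m * u m j)" for j
    unfolding lessThan_atLeast0
    using sum.atLeastLessThan_concat[of 0 M M' "\<lambda>m. c m * u m j", symmetric] assms by simp
  then show ?thesis
    by (simp add: l2_norm2_comb)
qed

lemma partial_sums_converge:
  assumes "summable (\<lambda>m. (cmod (c m))\<^sup>2)"
  obtains S where "\<And>M. l2 (\<lambda>j. S j - (\<Sum>m<M. c m * u m j))"
    and "(\<lambda>M. l2_norm2 (\<lambda>j. S j - (\<Sum>m<M. c m * u m j))) \<longlonglongrightarrow> 0"
proof -
  have Cauchy: "\<exists>N. \<forall>m\<ge>N. \<forall>n\<ge>m. l2_norm2 (\<lambda>j. (\<Sum>k<n. c k * u k j) - (\<Sum>k<m. c k * u k j)) < e"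
    if "0 < e" for e
  proof -
    from that obtain N where N: "\<And>m n. m \<ge> N \<Longrightarrow> norm (\<Sum>k\<in>{m..<n}. (cmod (c k))\<^sup>2) < e"
      using assms unfolding summable_Cauchy by blast
    have "l2_norm2 (\<lambda>j. (\<Sum>k<n. c k * u k j) - (\<Sum>k<m. c k * u k j)) < e" if "N \<le> m" "m \<le> n" for m n
      using N[OF that(1), of n] by (simp add: l2_norm2_partial_sums_diff[OF that(2)] abs_less_iff)
    then show ?thesis
      by blast
  qed
  show ?thesis
    by (rule l2_Cauchy_converges[OF l2_comb Cauchy]) (assumption, rule that)
qed

end

locale l2_orthonormal_basis = l2_orthonormal +
  assumes total: "\<And>y. l2 y \<Longrightarrow> (\<And>m. l2_inner y (u m) = 0) \<Longrightarrow> y = (\<lambda>_. 0)"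
begin

lemma expansion_limit_eq:
  assumes x: "l2 x"
    and S: "\<And>M. l2 (\<lambda>j. S j - (\<Sum>m<M. l2_inner x (u m) * u m j))"
    and tail: "(\<lambda>M. l2_norm2 (\<lambda>j. S j - (\<Sum>m<M. l2_inner x (u m) * u m j))) \<longlonglongrightarrow> 0"
  shows "S = x"
proof -
  define s where "s M j = (\<Sum>m<M. l2_inner x (u m) * u m j)" for M j
  define D where "D j = x j - S j" for j
  have D_eq: "D = (\<lambda>j. (x j - s M j) - (S j - s M j))" for M
    unfolding D_def by auto
  have x_s: "l2 (\<lambda>j. x j - s M j)" for M
    unfolding s_def by (intro l2_diff x l2_comb)
  have S_s: "l2 (\<lambda>j. S j - s M j)" for M
    using S unfolding s_def .
  have D: "l2 D"
    unfolding D_eq[of 0] by (intro l2_diff x_s S_s)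
  have "(cmod (l2_inner D (u k)))\<^sup>2 \<le> l2_norm2 (\<lambda>j. S j - s M j)" if "k < M" for k M
  proof -
    have "l2_inner (\<lambda>j. x j - s M j) (u k) = 0"
      using that by (simp add: l2_inner_diff_left x l2_comb l2_u s_def l2_inner_comb_u)
    moreover have "l2_inner D (u k) = l2_inner (\<lambda>j. x j - s M j) (u k) - l2_inner (\<lambda>j. S j - s M j) (u k)"
      unfolding D_eq[of M] by (rule l2_inner_diff_left[OF x_s S_s l2_u])
    ultimately have "l2_inner D (u k) = - l2_inner (\<lambda>j. S j - s M j) (u k)"
      by simp
    then show ?thesis
      using bessel_inequality[OF S_s, of "{k}" M] by simp
  qed
  then have "(cmod (l2_inner D (u k)))\<^sup>2 \<le> 0" for k
    using tail unfolding s_def[symmetric]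
    by (intro tendsto_le[OF _ _ tendsto_const]) (auto simp: eventually_sequentially intro!: exI[of _ "Suc k"])
  then have "D = (\<lambda>_. 0)"
    by (intro total D) simp
  then show ?thesis
    unfolding D_def by (simp add: fun_eq_iff)
qed

theorem parseval:
  assumes x: "l2 x"
  shows "(\<lambda>m. (cmod (l2_inner x (u m)))\<^sup>2) sums l2_norm2 x"
proof -
  have "(\<Sum>m<M. (cmod (l2_inner x (u m)))\<^sup>2) \<le> l2_norm2 x" for M
    by (rule bessel_inequality[OF x]) simp
  then have "summable (\<lambda>m. (cmod (l2_inner x (u m)))\<^sup>2)"
    by (rule summableI_nonneg_bounded[rotated]) simp
  then obtain S where S: "\<And>M. l2 (\<lambda>j. S j - (\<Sum>m<M. l2_inner x (u m) * u m j))"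
    and tail: "(\<lambda>M. l2_norm2 (\<lambda>j. S j - (\<Sum>m<M. l2_inner x (u m) * u m j))) \<longlonglongrightarrow> 0"
    by (rule partial_sums_converge) blast
  have "l2_norm2 (\<lambda>j. x j - (\<Sum>m<M. l2_inner x (u m) * u m j)) = l2_norm2 x - (\<Sum>m<M. (cmod (l2_inner x (u m)))\<^sup>2)" for M
    by (rule l2_norm2_diff_projection[OF x]) simp
  with tail expansion_limit_eq[OF x S tail]
  have "(\<lambda>M. l2_norm2 x - (\<Sum>m<M. (cmod (l2_inner x (u m)))\<^sup>2)) \<longlonglongrightarrow> 0"
    by simp
  then have "(\<lambda>M. l2_norm2 x - (l2_norm2 x - (\<Sum>m<M. (cmod (l2_inner x (u m)))\<^sup>2))) \<longlonglongrightarrow> l2_norm2 x - 0"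
    by (intro tendsto_diff tendsto_const)
  then show ?thesis
    unfolding sums_def by simp
qed

end

section \<open>Orthonormal bases of \<open>H\<^sup>2\<close>\<close>

lemma l2_taylor_coeff: "in_H2 f \<Longrightarrow> l2 (taylor_coeff f)"
  by (simp add: in_H2_iff_summable_taylor l2_def)

lemma H2_inner_eq_l2_inner: "in_H2 f \<Longrightarrow> in_H2 g \<Longrightarrow> H2_inner f g = l2_inner (taylor_coeff f) (taylor_coeff g)"
  unfolding l2_inner_def by (rule H2_inner_eq_taylor)

lemma H2_function_of_l2:
  assumes y: "l2 y"
  obtains F where "in_H2 F" "taylor_coeff F = y" "\<And>z. z \<in> ball 0 1 \<Longrightarrow> (\<lambda>j. y j * z^j) sums F z"
proof -
  define B where "B = sqrt (l2_norm2 y)"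
  have yB: "cmod (y j) \<le> B" for j
    unfolding B_def using norm_square_le_l2_norm2[OF y, of j] by (simp add: real_le_rsqrt)
  define F where "F z = (\<Sum>j. y j * z^j)" for z
  have S: "(\<lambda>j. y j * z^j) sums F z" if "z \<in> ball 0 1" for z
  proof -
    have "summable (\<lambda>j. B * cmod z ^ j)"
      using that by (intro summable_mult summable_geometric) auto
    then have "summable (\<lambda>j. y j * z^j)"
      by (rule summable_comparison_test'[where N=0])
         (simp add: norm_mult norm_power mult_right_mono[OF yB])
    then show ?thesis
      unfolding F_def by (rule summable_sums)
  qed
  have "taylor_coeff F = y"
    by (rule taylor_coeff_power_series[OF S])
  moreover have "in_H2 F"
    unfolding in_H2_iff_summable_taylor \<open>taylor_coeff F = y\<close>
    using power_series_disc_holomorphic[OF S] y by (simp add: l2_def)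
  ultimately show ?thesis
    using S that by blast
qed

lemma taylor_coeff_monomial: "taylor_coeff (\<lambda>z. z^m) = (\<lambda>j. if j = m then 1 else 0)"
proof (rule taylor_coeff_power_series)
  fix z :: complex
  have "(\<lambda>j. (if j = m then 1 else 0) * z^j) = (\<lambda>j. if j = m then z^j else 0)"
    by auto
  then show "(\<lambda>j. (if j = m then 1 else 0) * z^j) sums z^m"
    using sums_single[of m "\<lambda>j. z^j"] by simp
qed

lemma in_H2_monomial: "in_H2 (\<lambda>z. z^m)"
proof -
  have "(\<lambda>k. (cmod (if k = m then 1 else 0 :: complex))\<^sup>2) = (\<lambda>k. if k = m then 1 else 0)"
    by auto
  then show ?thesis
    by (simp add: in_H2_iff_summable_taylor taylor_coeff_monomial holomorphic_intros)
qed

lemma H2_inner_monomial: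
  assumes "in_H2 f"
  shows "H2_inner f (\<lambda>z. z^m) = taylor_coeff f m"
proof -
  have "H2_inner f (\<lambda>z. z^m) = (\<Sum>k. if k = m then taylor_coeff f k else 0)"
    unfolding H2_inner_eq_taylor[OF assms in_H2_monomial] taylor_coeff_monomial
    by (simp add: if_distrib cong: if_cong)
  also have "\<dots> = taylor_coeff f m"
    using sums_single[of m "taylor_coeff f"] by (simp add: sums_iff)
  finally show ?thesis .
qed

lemma H2_ONB_monomials: "H2_ONB (\<lambda>m z. z^m)"
  unfolding H2_ONB_def
proof (intro conjI allI impI)
  show "in_H2 (\<lambda>z. z^m)" for m
    by (rule in_H2_monomial)
  show "H2_inner (\<lambda>z. z^j) (\<lambda>z. z^k) = (if j = k then 1 else 0)" for j k
    by (simp add: H2_inner_monomial[OF in_H2_monomial] taylor_coeff_monomial)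
  fix f assume "in_H2 f \<and> (\<forall>m. H2_inner f (\<lambda>z. z^m) = 0)"
  then have f: "f holomorphic_on ball 0 1" and "\<And>m. taylor_coeff f m = 0"
    by (auto simp: in_H2_iff_summable_taylor H2_inner_monomial)
  then show "\<forall>z\<in>ball 0 1. f z = 0"
    using taylor_coeff_sums[OF f] by (simp add: sums_iff)
qed

lemma H2_ONB_l2_orthonormal_basis:
  assumes e: "H2_ONB e"
  shows "l2_orthonormal_basis (\<lambda>m. taylor_coeff (e m))"
proof unfold_locales
  have in_e: "in_H2 (e m)" for m
    using e by (simp add: H2_ONB_def)
  show "l2 (taylor_coeff (e m))" for m
    by (rule l2_taylor_coeff[OF in_e])
  show "l2_inner (taylor_coeff (e m)) (taylor_coeff (e k)) = (if m = k then 1 else 0)" for m k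
    using e by (simp add: H2_ONB_def H2_inner_eq_l2_inner[OF in_e in_e, symmetric])
  fix y assume y: "l2 y" and orth: "\<And>m. l2_inner y (taylor_coeff (e m)) = 0"
  obtain F where F: "in_H2 F" "taylor_coeff F = y" and S: "\<And>z. z \<in> ball 0 1 \<Longrightarrow> (\<lambda>j. y j * z^j) sums F z"
    using H2_function_of_l2[OF y] by blast
  have "H2_inner F (e m) = 0" for m
    using orth[of m] by (simp add: H2_inner_eq_l2_inner[OF F(1) in_e] F(2))
  then have "\<forall>z\<in>ball 0 1. F z = 0"
    using e F(1) by (simp add: H2_ONB_def)
  then have "(\<lambda>j. 0 * z^j) sums F z" if "z \<in> ball 0 1" for z
    using that by simp
  from power_series_disc_unique[OF S this] show "y = (\<lambda>_. 0)" .
qed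

section \<open>The kernel of \<open>n\<close>-th derivatives\<close>

lemma fact_add_square_le: "(fact (k+n) :: nat)\<^sup>2 \<le> fact (k+2*n) * fact k"
proof (induction n)
  case 0
  then show ?case by (simp add: power2_eq_square)
next
  case (Suc n)
  have fact_Suc_sq: "(fact (k + Suc n) :: nat)\<^sup>2 = (k+n+1)\<^sup>2 * (fact (k+n))\<^sup>2"
    unfolding add_Suc_right fact_Suc power_mult_distrib by simp
  have fact_Suc2: "(fact (k + 2 * Suc n) :: nat) = (k+2*n+2) * (k+2*n+1) * fact (k+2*n)"
  proof -
    have "k + 2 * Suc n = Suc (Suc (k+2*n))" by simp
    then show ?thesis by (simp only: fact_Suc) (simp add: algebra_simps)
  qed
  have "(fact (k + Suc n) :: nat)\<^sup>2 \<le> (k+n+1)\<^sup>2 * (fact (k+2*n) * fact k)"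
    unfolding fact_Suc_sq by (rule mult_left_mono[OF Suc.IH]) simp
  also have "\<dots> \<le> ((k+2*n+2) * (k+2*n+1)) * (fact (k+2*n) * fact k)"
    by (rule mult_right_mono) (simp_all add: power2_eq_square algebra_simps)
  also have "\<dots> = fact (k + 2 * Suc n) * fact k"
    unfolding fact_Suc2 by (simp only: mult.assoc)
  finally show ?case .
qed

lemma fact_add_mult_le: "(fact (k+2*n) :: nat) * fact k \<le> fact (2*n) * (fact (k+n))\<^sup>2"
proof (induction k)
  case 0
  have "1 \<le> (fact n :: nat)\<^sup>2" by (simp add: Suc_le_eq)
  then show ?case by simp
next
  case (Suc k)
  have fact_Suc_prod: "(fact (Suc k + 2*n) :: nat) * fact (Suc k) = ((k+2*n+1) * (k+1)) * (fact (k+2*n) * fact k)"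
    by (simp add: algebra_simps)
  have fact_Suc_sq: "(fact (Suc k + n) :: nat)\<^sup>2 = (k+n+1)\<^sup>2 * (fact (k+n))\<^sup>2"
    unfolding add_Suc fact_Suc power_mult_distrib by simp
  have "(fact (Suc k + 2*n) :: nat) * fact (Suc k) \<le> (k+n+1)\<^sup>2 * (fact (2*n) * (fact (k+n))\<^sup>2)"
    unfolding fact_Suc_prod by (rule mult_mono[OF _ Suc.IH]) (simp_all add: power2_eq_square algebra_simps)
  also have "\<dots> = fact (2*n) * (fact (Suc k + n))\<^sup>2"
    unfolding fact_Suc_sq by (simp add: mult_ac)
  finally show ?case .
qed

text \<open>\<open>(deriv ^^ n) (\<lambda>z. z ^ (k+n)) = (\<lambda>z. deriv_factor n k * z ^ k)\<close>.\<close>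

definition deriv_factor :: "nat \<Rightarrow> nat \<Rightarrow> real" where
  "deriv_factor n k = fact (k+n) / fact k"

lemma binomial_eq_fact_ratio: "real ((k+2*n) choose (2*n)) = fact (k+2*n) / (fact (2*n) * fact k)"
  by (simp add: binomial_fact)

lemma binomial_le_deriv_factor_square: "real ((k+2*n) choose (2*n)) \<le> (deriv_factor n k)\<^sup>2"
proof -
  have "real ((fact (k+2*n) :: nat) * fact k) \<le> real (fact (2*n) * (fact (k+n))\<^sup>2)"
    using fact_add_mult_le[of k n] by (simp only: of_nat_le_iff)
  then have le: "(fact (k+2*n) :: real) * fact k \<le> fact (2*n) * (fact (k+n))\<^sup>2"
    by (simp add: of_nat_fact)
  have "real ((k+2*n) choose (2*n)) = (fact (k+2*n) * fact k) / (fact (2*n) * (fact k)\<^sup>2)"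
    unfolding binomial_eq_fact_ratio by (simp add: power2_eq_square field_simps)
  also have "\<dots> \<le> (fact (2*n) * (fact (k+n))\<^sup>2) / (fact (2*n) * (fact k)\<^sup>2)"
    by (rule divide_right_mono[OF le]) simp
  also have "\<dots> = (deriv_factor n k)\<^sup>2"
    by (simp add: deriv_factor_def power_divide)
  finally show ?thesis .
qed

lemma deriv_factor_square_le: "(deriv_factor n k)\<^sup>2 \<le> fact (2*n) * real ((k+2*n) choose (2*n))"
proof -
  have "real ((fact (k+n) :: nat)\<^sup>2) \<le> real (fact (k+2*n) * fact k)"
    using fact_add_square_le[of k n] by (simp only: of_nat_le_iff)
  then have le: "(fact (k+n) :: real)\<^sup>2 \<le> fact (k+2*n) * fact k"
    by (simp add: of_nat_fact)
  have "(deriv_factor n k)\<^sup>2 = (fact (k+n))\<^sup>2 / (fact k)\<^sup>2"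
    by (simp add: deriv_factor_def power_divide)
  also have "\<dots> \<le> (fact (k+2*n) * fact k) / (fact k)\<^sup>2"
    by (rule divide_right_mono[OF le]) simp
  also have "\<dots> = fact (2*n) * real ((k+2*n) choose (2*n))"
    unfolding binomial_eq_fact_ratio by (simp add: power2_eq_square field_simps)
  finally show ?thesis .
qed

lemma sums_binomial_power:
  fixes x :: real
  assumes x: "\<bar>x\<bar> < 1"
  shows "(\<lambda>j. real ((j+p) choose p) * x^j) sums (1 / (1-x)^(p+1))"
proof -
  have "\<bar>-x\<bar> < 1" using x by simp
  from gen_binomial_real[OF this, of "- real (p+1)"]
  have A: "(\<lambda>j. ((- real (p+1)) gchoose j) * (-x)^j) sums (1 + - x) powr (- real (p+1))" .
  have "((- real (p+1)) gchoose j) * (-x)^j = real ((j+p) choose p) * x^j" for j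
  proof -
    have "((- real (p+1)) gchoose j) = (-1)^j * ((real (p+1) + of_nat j - 1) gchoose j)"
      using gbinomial_minus[of "real (p+1)" j] .
    also have "(real (p+1) + of_nat j - 1) = real (j+p)" by simp
    also have "(real (j+p) gchoose j) = real ((j+p) choose j)" by (simp add: binomial_gbinomial)
    also have "(j+p) choose j = (j+p) choose p" using binomial_symmetric[of j "j+p"] by simp
    finally have G: "((- real (p+1)) gchoose j) = (-1)^j * real ((j+p) choose p)" .
    have m: "(-1::real)^j * (-1)^j = 1" by (simp add: power_mult_distrib[symmetric])
    have "((- real (p+1)) gchoose j) * (-x)^j = ((-1)^j * (-1)^j) * (real ((j+p) choose p) * x^j)"
      unfolding G power_minus[of x j] by (simp only: mult_ac)
    then show ?thesis unfolding m by simp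
  qed
  moreover have "(1 + - x) powr (- real (p+1)) = 1 / (1-x)^(p+1)"
  proof -
    have pos: "0 < 1 - x" using x by simp
    have "(1 + - x) powr (- real (p+1)) = inverse ((1-x) powr real (p+1))" using powr_minus[of "1-x" "real (p+1)"] by simp
    also have "\<dots> = inverse ((1-x)^(p+1))" using powr_realpow[OF pos, of "p+1"] by simp
    finally show ?thesis by (simp only: inverse_eq_divide)
  qed
  ultimately show ?thesis using A by simp
qed

definition deriv_kernel :: "nat \<Rightarrow> real \<Rightarrow> real" where
  "deriv_kernel n x = (\<Sum>k. (deriv_factor n k)\<^sup>2 * x^k)"

lemma summable_deriv_kernel:
  assumes "\<bar>x\<bar> < 1"
  shows "summable (\<lambda>k. (deriv_factor n k)\<^sup>2 * x^k)"
proof (rule summable_comparison_test'[where N=0])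
  show "summable (\<lambda>k. fact (2*n) * (real ((k+2*n) choose (2*n)) * \<bar>x\<bar>^k))"
    using sums_binomial_power[of "\<bar>x\<bar>" "2*n"] assms by (intro summable_mult sums_summable) auto
  show "norm ((deriv_factor n k)\<^sup>2 * x^k) \<le> fact (2*n) * (real ((k+2*n) choose (2*n)) * \<bar>x\<bar>^k)" for k
    using mult_right_mono[OF deriv_factor_square_le, of "\<bar>x\<bar>^k" n k]
    by (simp add: abs_mult power_abs mult_ac)
qed

lemma deriv_kernel_ge:
  assumes "0 \<le> x" "x < 1"
  shows "1 / (1-x)^(2*n+1) \<le> deriv_kernel n x"
  unfolding deriv_kernel_def
  by (rule sums_le[OF _ sums_binomial_power summable_sums[OF summable_deriv_kernel]])
     (use assms in \<open>auto intro: mult_right_mono binomial_le_deriv_factor_square\<close>)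

lemma deriv_kernel_le:
  assumes "0 \<le> x" "x < 1"
  shows "deriv_kernel n x \<le> fact (2*n) * (1 / (1-x)^(2*n+1))"
  unfolding deriv_kernel_def
  by (rule sums_le[OF _ summable_sums[OF summable_deriv_kernel] sums_mult[OF sums_binomial_power]])
     (use assms in \<open>auto simp: mult.assoc[symmetric] intro: mult_right_mono deriv_factor_square_le\<close>)

lemma isCont_deriv_kernel:
  assumes "\<bar>x\<bar> < 1"
  shows "isCont (deriv_kernel n) x"
  unfolding deriv_kernel_def[abs_def]
  by (rule isCont_powser[where K="(1 + \<bar>x\<bar>) / 2"]) (use assms in \<open>auto intro: summable_deriv_kernel\<close>)

lemma taylor_coeff_higher_deriv:
  "taylor_coeff ((deriv ^^ n) f) k = taylor_coeff f (k+n) * of_real (deriv_factor n k)"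
proof -
  have "(deriv ^^ k) ((deriv ^^ n) f) = (deriv ^^ (k+n)) f"
    by (simp add: funpow_add)
  then show ?thesis
    unfolding taylor_coeff_def deriv_factor_def by (simp add: field_simps)
qed

lemma higher_deriv_sums_taylor:
  assumes f: "f holomorphic_on ball 0 1" and w: "w \<in> ball 0 1"
  shows "(\<lambda>k. taylor_coeff f (k+n) * of_real (deriv_factor n k) * w^k) sums (deriv ^^ n) f w"
  using taylor_coeff_sums[OF holomorphic_higher_deriv[OF f] w] by (simp add: taylor_coeff_higher_deriv)

text \<open>Taylor coefficients of the kernel \<open>K\<close> with \<open>H2_inner f K = (deriv ^^ n) f w\<close>; its squared norm
  is \<open>deriv_kernel n (|w|\<^sup>2)\<close>.\<close>

definition deriv_kernel_coeffs :: "nat \<Rightarrow> complex \<Rightarrow> nat \<Rightarrow> complex" where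
  "deriv_kernel_coeffs n w j = (if n \<le> j then of_real (deriv_factor n (j-n)) * cnj w ^ (j-n) else 0)"

lemma deriv_kernel_coeffs_sums:
  assumes w: "w \<in> ball 0 1"
  shows "(\<lambda>j. (cmod (deriv_kernel_coeffs n w j))\<^sup>2) sums deriv_kernel n ((cmod w)\<^sup>2)"
proof -
  have "\<bar>(cmod w)\<^sup>2\<bar> < 1"
    using w by (simp add: abs_square_less_1)
  then have "(\<lambda>k. (deriv_factor n k)\<^sup>2 * ((cmod w)\<^sup>2)^k) sums deriv_kernel n ((cmod w)\<^sup>2)"
    unfolding deriv_kernel_def by (rule summable_sums[OF summable_deriv_kernel])
  moreover have "(cmod (deriv_kernel_coeffs n w (k+n)))\<^sup>2 = (deriv_factor n k)\<^sup>2 * ((cmod w)\<^sup>2)^k" for k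
    by (simp add: deriv_kernel_coeffs_def norm_mult norm_power power_mult_distrib power_mult[symmetric] mult.commute)
  ultimately have "(\<lambda>k. (cmod (deriv_kernel_coeffs n w (k+n)))\<^sup>2) sums deriv_kernel n ((cmod w)\<^sup>2)"
    by simp
  then show ?thesis
    by (subst (asm) sums_zero_iff_shift) (auto simp: deriv_kernel_coeffs_def)
qed

lemma l2_deriv_kernel_coeffs:
  "w \<in> ball 0 1 \<Longrightarrow> l2 (deriv_kernel_coeffs n w)"
  unfolding l2_def using deriv_kernel_coeffs_sums by (rule sums_summable)

lemma l2_norm2_deriv_kernel_coeffs:
  "w \<in> ball 0 1 \<Longrightarrow> l2_norm2 (deriv_kernel_coeffs n w) = deriv_kernel n ((cmod w)\<^sup>2)"
  unfolding l2_norm2_def using deriv_kernel_coeffs_sums by (simp add: sums_iff)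

lemma l2_inner_deriv_kernel_coeffs:
  assumes f: "f holomorphic_on ball 0 1" and w: "w \<in> ball 0 1"
  shows "l2_inner (taylor_coeff f) (deriv_kernel_coeffs n w) = (deriv ^^ n) f w"
proof -
  have "(\<lambda>k. taylor_coeff f (k+n) * cnj (deriv_kernel_coeffs n w (k+n))) sums (deriv ^^ n) f w"
    using higher_deriv_sums_taylor[OF f w, of n] by (simp add: deriv_kernel_coeffs_def mult.assoc)
  then have "(\<lambda>j. taylor_coeff f j * cnj (deriv_kernel_coeffs n w j)) sums (deriv ^^ n) f w"
    by (subst (asm) sums_zero_iff_shift) (auto simp: deriv_kernel_coeffs_def)
  then show ?thesis
    unfolding l2_inner_def by (simp add: sums_iff)
qed

lemma H2_ONB_higher_deriv_sums:
  assumes e: "H2_ONB e" and w: "w \<in> ball 0 1"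
  shows "(\<lambda>m. (cmod ((deriv ^^ n) (e m) w))\<^sup>2) sums deriv_kernel n ((cmod w)\<^sup>2)"
proof -
  interpret l2_orthonormal_basis "\<lambda>m. taylor_coeff (e m)"
    by (rule H2_ONB_l2_orthonormal_basis[OF e])
  have "e m holomorphic_on ball 0 1" for m
    using e by (simp add: H2_ONB_def in_H2_def)
  then have "l2_inner (deriv_kernel_coeffs n w) (taylor_coeff (e m)) = cnj ((deriv ^^ n) (e m) w)" for m
    using l2_inner_commute[OF l2_u l2_deriv_kernel_coeffs[OF w]] l2_inner_deriv_kernel_coeffs[OF _ w]
    by simp
  then show ?thesis
    using parseval[OF l2_deriv_kernel_coeffs[OF w, of n]] by (simp add: l2_norm2_deriv_kernel_coeffs[OF w])
qed

section \<open>The Hilbert--Schmidt criterion\<close>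

lemma self_map_disc_norm_square_less_1:
  assumes "\<phi> ` ball 0 1 \<subseteq> ball 0 1" "z \<in> ball 0 1"
  shows "0 \<le> (cmod (\<phi> z))\<^sup>2" "(cmod (\<phi> z))\<^sup>2 < 1"
proof -
  have "\<phi> z \<in> ball 0 1" using assms by blast
  then show "0 \<le> (cmod (\<phi> z))\<^sup>2" "(cmod (\<phi> z))\<^sup>2 < 1"
    by (auto simp: abs_square_less_1)
qed

lemma continuous_on_weight:
  assumes "continuous_on (ball 0 1) \<phi>" "\<phi> ` ball 0 1 \<subseteq> ball 0 1"
  shows "continuous_on (ball 0 1) (\<lambda>z. 1 / (1 - (cmod (\<phi> z))\<^sup>2)^p)"
  using assms self_map_disc_norm_square_less_1(2)[OF assms(2)] by (intro continuous_intros) force+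

lemma circle_avg_weight_sums:
  assumes \<phi>: "\<phi> holomorphic_on ball 0 1" "\<phi> ` ball 0 1 \<subseteq> ball 0 1" and r: "0 \<le> r" "r < 1"
  shows "(\<lambda>j. real ((j+p) choose p) * H2_mean (\<lambda>z. \<phi> z ^ j) r)
           sums circle_avg (\<lambda>z. 1 / (1 - (cmod (\<phi> z))\<^sup>2)^(p+1)) r"
proof -
  have cont: "continuous_on (ball 0 1) \<phi>"
    by (rule holomorphic_on_imp_continuous_on[OF \<phi>(1)])
  have "(\<lambda>j. circle_avg (\<lambda>z. real ((j+p) choose p) * (cmod (\<phi> z ^ j))\<^sup>2) r)
          sums circle_avg (\<lambda>z. 1 / (1 - (cmod (\<phi> z))\<^sup>2)^(p+1)) r"
  proof (rule circle_avg_sums[OF _ _ continuous_on_weight[OF cont \<phi>(2)] _ r])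
    show "continuous_on (ball 0 1) (\<lambda>z. real ((j+p) choose p) * (cmod (\<phi> z ^ j))\<^sup>2)" for j
      by (intro continuous_intros cont)
    fix z :: complex assume "z \<in> ball 0 1"
    from self_map_disc_norm_square_less_1[OF \<phi>(2) this]
    have "(\<lambda>j. real ((j+p) choose p) * ((cmod (\<phi> z))\<^sup>2)^j) sums (1 / (1 - (cmod (\<phi> z))\<^sup>2)^(p+1))"
      by (intro sums_binomial_power) auto
    then show "(\<lambda>j. real ((j+p) choose p) * (cmod (\<phi> z ^ j))\<^sup>2) sums (1 / (1 - (cmod (\<phi> z))\<^sup>2)^(p+1))"
      by (simp add: norm_power power_mult[symmetric] mult.commute[of 2])
  qed simp
  then show ?thesis
    by (simp add: H2_mean_eq_circle_avg circle_avg_cmult)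
qed

lemma circle_avg_weight_mono:
  assumes \<phi>: "\<phi> holomorphic_on ball 0 1" "\<phi> ` ball 0 1 \<subseteq> ball 0 1" and r: "0 \<le> r1" "r1 \<le> r2" "r2 < 1"
  shows "circle_avg (\<lambda>z. 1 / (1 - (cmod (\<phi> z))\<^sup>2)^(p+1)) r1 \<le> circle_avg (\<lambda>z. 1 / (1 - (cmod (\<phi> z))\<^sup>2)^(p+1)) r2"
proof (rule sums_le[OF _ circle_avg_weight_sums[OF \<phi>] circle_avg_weight_sums[OF \<phi>]])
  show "real ((j+p) choose p) * H2_mean (\<lambda>z. \<phi> z ^ j) r1 \<le> real ((j+p) choose p) * H2_mean (\<lambda>z. \<phi> z ^ j) r2" for j
    using r by (intro mult_left_mono H2_mean_mono holomorphic_intros \<phi>(1)) auto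
qed (use r in auto)

lemma continuous_on_deriv_kernel_norm_square:
  assumes "continuous_on (ball 0 1) \<phi>" "\<phi> ` ball 0 1 \<subseteq> ball 0 1"
  shows "continuous_on (ball 0 1) (\<lambda>z. deriv_kernel n ((cmod (\<phi> z))\<^sup>2))"
proof -
  have "continuous_on {0..<1} (deriv_kernel n)"
    by (rule continuous_at_imp_continuous_on) (auto intro!: isCont_deriv_kernel)
  moreover have "continuous_on (ball 0 1) (\<lambda>z. (cmod (\<phi> z))\<^sup>2)"
    by (intro continuous_intros assms(1))
  moreover have "(\<lambda>z. (cmod (\<phi> z))\<^sup>2) ` ball 0 1 \<subseteq> {0..<1}"
    using self_map_disc_norm_square_less_1[OF assms(2)] by auto
  ultimately show ?thesis
    by (rule continuous_on_compose2)
qed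

lemma circle_avg_deriv_kernel_sums:
  assumes e: "H2_ONB e" and \<phi>: "\<phi> holomorphic_on ball 0 1" "\<phi> ` ball 0 1 \<subseteq> ball 0 1"
    and r: "0 \<le> r" "r < 1"
  shows "(\<lambda>m. H2_mean (D_op \<phi> n (e m)) r) sums circle_avg (\<lambda>z. deriv_kernel n ((cmod (\<phi> z))\<^sup>2)) r"
  unfolding H2_mean_eq_circle_avg D_op_def
proof (rule circle_avg_sums[OF _ _ _ _ r])
  have cont: "continuous_on (ball 0 1) \<phi>"
    by (rule holomorphic_on_imp_continuous_on[OF \<phi>(1)])
  show "continuous_on (ball 0 1) (\<lambda>z. deriv_kernel n ((cmod (\<phi> z))\<^sup>2))"
    by (rule continuous_on_deriv_kernel_norm_square[OF cont \<phi>(2)])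
  have "e m holomorphic_on ball 0 1" for m
    using e by (simp add: H2_ONB_def in_H2_def)
  then have "continuous_on (ball 0 1) ((deriv ^^ n) (e m))" for m
    by (intro holomorphic_on_imp_continuous_on holomorphic_higher_deriv) auto
  then show "continuous_on (ball 0 1) (\<lambda>z. (cmod ((deriv ^^ n) (e m) (\<phi> z)))\<^sup>2)" for m
    using \<phi>(2) by (intro continuous_intros continuous_on_compose2[OF _ cont]) auto
  show "(\<lambda>m. (cmod ((deriv ^^ n) (e m) (\<phi> z)))\<^sup>2) sums deriv_kernel n ((cmod (\<phi> z))\<^sup>2)"
    if "z \<in> ball 0 1" for z
    by (rule H2_ONB_higher_deriv_sums[OF e]) (use \<phi>(2) that in blast)
qed simp

lemma circle_avg_weight_le_deriv_kernel:
  assumes \<phi>: "\<phi> holomorphic_on ball 0 1" "\<phi> ` ball 0 1 \<subseteq> ball 0 1" and r: "0 \<le> r" "r < 1"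
  shows "circle_avg (\<lambda>z. 1 / (1 - (cmod (\<phi> z))\<^sup>2)^(2*n+1)) r
           \<le> circle_avg (\<lambda>z. deriv_kernel n ((cmod (\<phi> z))\<^sup>2)) r"
    and "circle_avg (\<lambda>z. deriv_kernel n ((cmod (\<phi> z))\<^sup>2)) r
           \<le> fact (2*n) * circle_avg (\<lambda>z. 1 / (1 - (cmod (\<phi> z))\<^sup>2)^(2*n+1)) r"
proof -
  have cont: "continuous_on (ball 0 1) \<phi>"
    by (rule holomorphic_on_imp_continuous_on[OF \<phi>(1)])
  note conts = continuous_on_weight[OF cont \<phi>(2)] continuous_on_deriv_kernel_norm_square[OF cont \<phi>(2)]
  note bounds = self_map_disc_norm_square_less_1[OF \<phi>(2)]
  show "circle_avg (\<lambda>z. 1 / (1 - (cmod (\<phi> z))\<^sup>2)^(2*n+1)) r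
           \<le> circle_avg (\<lambda>z. deriv_kernel n ((cmod (\<phi> z))\<^sup>2)) r"
    using bounds by (intro circle_avg_mono conts deriv_kernel_ge r)
  have "circle_avg (\<lambda>z. deriv_kernel n ((cmod (\<phi> z))\<^sup>2)) r
          \<le> circle_avg (\<lambda>z. fact (2*n) * (1 / (1 - (cmod (\<phi> z))\<^sup>2)^(2*n+1))) r"
    using bounds by (intro circle_avg_mono conts continuous_intros deriv_kernel_le r)
  then show "circle_avg (\<lambda>z. deriv_kernel n ((cmod (\<phi> z))\<^sup>2)) r
           \<le> fact (2*n) * circle_avg (\<lambda>z. 1 / (1 - (cmod (\<phi> z))\<^sup>2)^(2*n+1)) r"
    by (simp only: circle_avg_cmult)
qed

lemma Hilbert_Schmidt_if_weight_avg_converges: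
  assumes \<phi>: "\<phi> holomorphic_on ball 0 1" "\<phi> ` ball 0 1 \<subseteq> ball 0 1"
    and bdd: "H2_bounded_op (D_op \<phi> n)"
    and L: "(circle_avg (\<lambda>z. 1 / (1 - (cmod (\<phi> z))\<^sup>2)^(2*n+1)) \<longlongrightarrow> L) (at_left 1)"
  shows "H2_Hilbert_Schmidt (D_op \<phi> n)"
proof -
  define h where "h m = D_op \<phi> n (\<lambda>z. z^m)" for m
  define W where "W = circle_avg (\<lambda>z. 1 / (1 - (cmod (\<phi> z))\<^sup>2)^(2*n+1))"
  have h: "in_H2 (h m)" for m
    using bdd in_H2_monomial unfolding H2_bounded_op_def h_def by blast
  have bound: "(\<Sum>m<M. H2_mean (h m) r) \<le> fact (2*n) * W r" if r: "0 < r" "r < 1" for M r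
  proof -
    have S: "(\<lambda>m. H2_mean (h m) r) sums circle_avg (\<lambda>z. deriv_kernel n ((cmod (\<phi> z))\<^sup>2)) r"
      unfolding h_def using circle_avg_deriv_kernel_sums[OF H2_ONB_monomials \<phi>] r by simp
    have "0 \<le> H2_mean (h m) r" for m
      using h r by (intro H2_mean_nonneg) (auto simp: in_H2_def)
    then have "(\<Sum>m<M. H2_mean (h m) r) \<le> circle_avg (\<lambda>z. deriv_kernel n ((cmod (\<phi> z))\<^sup>2)) r"
      using sum_le_suminf[OF sums_summable[OF S], of "{..<M}"] S by (simp add: sums_iff)
    also have "\<dots> \<le> fact (2*n) * W r"
      unfolding W_def using r by (intro circle_avg_weight_le_deriv_kernel(2) \<phi>) auto
    finally show ?thesis .
  qed
  have "(\<Sum>m<M. (H2_norm (h m))\<^sup>2) \<le> fact (2*n) * L" for M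
  proof (rule tendsto_le[of "at_left 1"])
    show "((\<lambda>r. fact (2*n) * W r) \<longlongrightarrow> fact (2*n) * L) (at_left 1)"
      unfolding W_def by (intro tendsto_intros L)
    show "((\<lambda>r. \<Sum>m<M. H2_mean (h m) r) \<longlongrightarrow> (\<Sum>m<M. (H2_norm (h m))\<^sup>2)) (at_left 1)"
      by (intro tendsto_sum H2_mean_tendsto_H2_norm h)
    show "eventually (\<lambda>r. (\<Sum>m<M. H2_mean (h m) r) \<le> fact (2*n) * W r) (at_left 1)"
      using eventually_at_left_1_unit_interval by eventually_elim (auto intro: bound)
  qed simp
  then have "summable (\<lambda>m. (H2_norm (h m))\<^sup>2)"
    by (rule summableI_nonneg_bounded[rotated]) simp
  then show ?thesis
    unfolding H2_Hilbert_Schmidt_def h_def using bdd H2_ONB_monomials by blast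
qed

lemma weight_avg_converges_if_Hilbert_Schmidt:
  assumes \<phi>: "\<phi> holomorphic_on ball 0 1" "\<phi> ` ball 0 1 \<subseteq> ball 0 1"
    and HS: "H2_Hilbert_Schmidt (D_op \<phi> n)"
  shows "\<exists>L. (circle_avg (\<lambda>z. 1 / (1 - (cmod (\<phi> z))\<^sup>2)^(2*n+1)) \<longlongrightarrow> L) (at_left 1)"
proof -
  obtain e where e: "H2_ONB e" and sm: "summable (\<lambda>m. (H2_norm (D_op \<phi> n (e m)))\<^sup>2)"
    and bdd: "H2_bounded_op (D_op \<phi> n)"
    using HS unfolding H2_Hilbert_Schmidt_def by blast
  have h: "in_H2 (D_op \<phi> n (e m))" for m
    using bdd e unfolding H2_bounded_op_def H2_ONB_def by blast
  have "circle_avg (\<lambda>z. 1 / (1 - (cmod (\<phi> z))\<^sup>2)^(2*n+1)) r \<le> (\<Sum>m. (H2_norm (D_op \<phi> n (e m)))\<^sup>2)"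
    if r: "0 < r" "r < 1" for r
  proof -
    note S = circle_avg_deriv_kernel_sums[OF e \<phi>, of r n]
    have "circle_avg (\<lambda>z. 1 / (1 - (cmod (\<phi> z))\<^sup>2)^(2*n+1)) r
        \<le> circle_avg (\<lambda>z. deriv_kernel n ((cmod (\<phi> z))\<^sup>2)) r"
      using r by (intro circle_avg_weight_le_deriv_kernel(1) \<phi>) auto
    also have "\<dots> = (\<Sum>m. H2_mean (D_op \<phi> n (e m)) r)"
      using S r by (simp add: sums_iff)
    also have "\<dots> \<le> (\<Sum>m. (H2_norm (D_op \<phi> n (e m)))\<^sup>2)"
      using S r by (intro suminf_le sm H2_mean_le_H2_norm h) (auto simp: sums_iff)
    finally show ?thesis .
  qed
  moreover have "circle_avg (\<lambda>z. 1 / (1 - (cmod (\<phi> z))\<^sup>2)^(2*n+1)) a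
      \<le> circle_avg (\<lambda>z. 1 / (1 - (cmod (\<phi> z))\<^sup>2)^(2*n+1)) b" if "0 < a" "a \<le> b" "b < 1" for a b
    using that by (intro circle_avg_weight_mono \<phi>) auto
  ultimately show ?thesis
    by (intro convergent_at_left_1_if_mono_bounded)
qed

theorem theorem3p3:
  fixes \<phi> :: "complex \<Rightarrow> complex" and n :: nat
  assumes "\<phi> holomorphic_on ball 0 1" and "\<phi> ` ball 0 1 \<subseteq> ball 0 1"
    and "n > 0"
    and "H2_bounded_op (D_op \<phi> n)"
  shows "H2_Hilbert_Schmidt (D_op \<phi> n) \<longleftrightarrow>
    (\<exists>L. ((\<lambda>r. (1 / (2*pi)) * integral {0..2*pi}
        (\<lambda>\<theta>. 1 / (1 - (cmod (\<phi> (complex_of_real r * exp (\<i> * complex_of_real \<theta>))))\<^sup>2) ^ (2*n+1)))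
      \<longlongrightarrow> L) (at_left 1))"
proof -
  have "(\<lambda>r. (1 / (2*pi)) * integral {0..2*pi} (\<lambda>\<theta>. 1 / (1 - (cmod (\<phi> (circle_point r \<theta>)))\<^sup>2) ^ (2*n+1)))
      = circle_avg (\<lambda>z. 1 / (1 - (cmod (\<phi> z))\<^sup>2)^(2*n+1))"
    by (simp add: fun_eq_iff circle_avg_def)
  then show ?thesis
    using Hilbert_Schmidt_if_weight_avg_converges[OF assms(1,2,4)]
      weight_avg_converges_if_Hilbert_Schmidt[OF assms(1,2)]
    by auto
qed

end
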